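(* Let $X,Y$ be random variables with $0\le Y\le 1$ and $X=E(Y\mid X)$. Then for every $\delta\in[0,\tfrac12)$, $$P(|Y-X|\ge1-\delta)\le\delta,$$ with equality if $X=\delta$ (constant) and $Y$ has the Bernoulli$(\delta)$ distribution. *)

theory Defs
  imports "HOL-Probability.Probability"
begin

definition sigma_gen :: "'a measure \<Rightarrow> ('a \<Rightarrow> real) \<Rightarrow> 'a measure" where
  "sigma_gen M X = vimage_algebra (space M) X borel"

end

theory Submission
  imports Defs
begin

text \<open>On \<open>A = {X \<le> \<delta>}\<close> the variable \<open>Y - X\<close> can only reach the threshold \<open>1 - \<delta>\<close>
  from above, and on \<open>B = {X \<ge> 1 - \<delta>}\<close> only from below; outside \<open>A \<union> B\<close> it cannot reach it
  at all. Hence \<open>1{\<bar>Y - X\<bar> \<ge> 1 - \<delta>} \<le> \<delta> + (Y - X) (1\<^sub>A - 1\<^sub>B)\<close> pointwise. Both sets are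
  \<open>\<sigma>(X)\<close>-measurable, so \<open>X = E(Y | X)\<close> makes the integral of \<open>(Y - X) (1\<^sub>A - 1\<^sub>B)\<close> vanish,
  and integrating gives the bound.\<close>

lemma subalgebra_sigma_gen:
  assumes "X \<in> borel_measurable M"
  shows "subalgebra M (sigma_gen M X)"
  using assms unfolding subalgebra_def sigma_gen_def
  by (auto simp: sets_vimage_algebra2)

lemma vimage_in_sets_sigma_gen:
  assumes "A \<in> sets borel"
  shows "{x \<in> space M. X x \<in> A} \<in> sets (sigma_gen M X)"
  unfolding sigma_gen_def sets_vimage_algebra2[of X "space M" borel, simplified]
  using assms by blast

lemma (in sigma_finite_subalgebra) integral_indicator_cond_exp_version:
  assumes Y: "integrable M Y" and [measurable]: "X \<in> borel_measurable M"
    and X: "AE x in M. X x = real_cond_exp M F Y x"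
    and A: "A \<in> sets F"
  shows "(\<integral>x. indicator A x * Y x \<partial>M) = (\<integral>x. indicator A x * X x \<partial>M)"
proof -
  have "(\<integral>x. indicator A x * Y x \<partial>M) = (\<integral>x. indicator A x * real_cond_exp M F Y x \<partial>M)"
    using real_cond_exp_intA[OF Y A] unfolding set_lebesgue_integral_def by simp
  also have "\<dots> = (\<integral>x. indicator A x * X x \<partial>M)"
    using A subalg X by (intro integral_cong_AE) (auto simp: subalgebra_def)
  finally show ?thesis .
qed

lemma of_bool_deviation_le:
  fixes y x \<delta> :: real
  assumes "0 \<le> y" "y \<le> 1" "0 \<le> \<delta>" "\<delta> < 1/2"
  shows "of_bool (\<bar>y - x\<bar> \<ge> 1 - \<delta>)
    \<le> \<delta> + of_bool (x \<le> \<delta>) * (y - x) - of_bool (x \<ge> 1 - \<delta>) * (y - x)"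
  using assms by (auto simp: abs_if)

lemma prob_deviation_le_of_cond_exp:
  fixes X Y :: "'a \<Rightarrow> real"
  assumes "prob_space M" and "0 \<le> \<delta>" and "\<delta> < 1/2"
    and Xm[measurable]: "X \<in> borel_measurable M" and Ym[measurable]: "Y \<in> borel_measurable M"
    and Y_bounds: "AE x in M. 0 \<le> Y x \<and> Y x \<le> 1"
    and X_cond_exp: "AE x in M. X x = real_cond_exp M (sigma_gen M X) Y x"
  shows "measure M {x \<in> space M. \<bar>Y x - X x\<bar> \<ge> 1 - \<delta>} \<le> \<delta>"
proof -
  interpret prob_space M by fact
  interpret finite_measure_subalgebra M "sigma_gen M X"
    by unfold_locales (rule subalgebra_sigma_gen[OF Xm])
  define A where "A = {x \<in> space M. X x \<in> {..\<delta>}}"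
  define B where "B = {x \<in> space M. X x \<in> {1 - \<delta>..}}"
  define S where "S = {x \<in> space M. \<bar>Y x - X x\<bar> \<ge> 1 - \<delta>}"
  have AF: "A \<in> sets (sigma_gen M X)" and BF: "B \<in> sets (sigma_gen M X)"
    unfolding A_def B_def by (simp_all only: vimage_in_sets_sigma_gen atMost_borel atLeast_borel)
  have [measurable]: "A \<in> sets M" "B \<in> sets M" "S \<in> sets M"
    unfolding A_def B_def S_def by measurable
  have intY: "integrable M Y"
    by (rule integrable_const_bound[where B=1]) (use Y_bounds in auto)
  have intX: "integrable M X"
    using integrable_cong_AE[of X M "real_cond_exp M (sigma_gen M X) Y"] X_cond_exp intY
    by (auto simp: eq_commute)
  have int: "integrable M (\<lambda>x. indicator A x * Y x)" "integrable M (\<lambda>x. indicator A x * X x)"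
    "integrable M (\<lambda>x. indicator B x * Y x)" "integrable M (\<lambda>x. indicator B x * X x)"
    using integrable_mult_indicator[of _ M X] integrable_mult_indicator[of _ M Y] intX intY by simp_all
  have pointwise: "AE x in M. indicator S x \<le> \<delta> + (indicator A x * Y x - indicator A x * X x)
      - (indicator B x * Y x - indicator B x * X x)"
    using Y_bounds AE_space
  proof eventually_elim
    case (elim x)
    then show ?case
      using of_bool_deviation_le[where y="Y x" and x="X x"] assms(2,3)
      by (simp add: A_def B_def S_def indicator_def algebra_simps)
  qed
  have "measure M S = (\<integral>x. indicator S x \<partial>M)"
    by simp
  also have "\<dots> \<le> (\<integral>x. \<delta> + (indicator A x * Y x - indicator A x * X x)
      - (indicator B x * Y x - indicator B x * X x) \<partial>M)"
    by (rule integral_mono_AE) (use pointwise int in \<open>auto simp: less_top[symmetric]\<close>)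
  also have "\<dots> = \<delta>"
    using int integral_indicator_cond_exp_version[OF intY Xm X_cond_exp AF]
      integral_indicator_cond_exp_version[OF intY Xm X_cond_exp BF]
    by (simp add: prob_space)
  finally show ?thesis unfolding S_def .
qed

lemma prob_deviation_bernoulli:
  fixes X Y :: "'a \<Rightarrow> real"
  assumes "0 \<le> \<delta>" and "\<delta> < 1/2"
    and Ym[measurable]: "Y \<in> borel_measurable M"
    and X_const: "\<forall>x \<in> space M. X x = \<delta>"
    and Y_distr: "distr M borel Y = distr (measure_pmf (bernoulli_pmf \<delta>)) borel (\<lambda>b. if b then 1 else 0)"
  shows "measure M {x \<in> space M. \<bar>Y x - X x\<bar> \<ge> 1 - \<delta>} = \<delta>"
proof -
  define T where "T = {y::real. \<bar>y - \<delta>\<bar> \<ge> 1 - \<delta>}"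
  have T[measurable]: "T \<in> sets borel"
    unfolding T_def by measurable
  have "{x \<in> space M. \<bar>Y x - X x\<bar> \<ge> 1 - \<delta>} = Y -` T \<inter> space M"
    using X_const by (auto simp: T_def)
  then have "measure M {x \<in> space M. \<bar>Y x - X x\<bar> \<ge> 1 - \<delta>} = measure (distr M borel Y) T"
    by (simp add: measure_distr)
  also have "\<dots> = measure (bernoulli_pmf \<delta>) ((\<lambda>b. if b then 1 else (0::real)) -` T)"
    by (simp add: Y_distr measure_distr)
  also have "(\<lambda>b. if b then 1 else (0::real)) -` T = {True}"
    using assms(1,2) by (auto simp: T_def)
  also have "measure (bernoulli_pmf \<delta>) {True} = \<delta>"
    using assms(1,2) by (simp add: measure_pmf_single)
  finally show ?thesis .
qed

theorem lemma3p1: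
  fixes M :: "'a measure" and \<delta> :: real
  assumes "prob_space M"
    and "0 \<le> \<delta>" and "\<delta> < 1/2"
  shows "(\<forall>X Y. X \<in> borel_measurable M \<longrightarrow> Y \<in> borel_measurable M
            \<longrightarrow> (AE x in M. 0 \<le> Y x \<and> Y x \<le> 1)
            \<longrightarrow> (AE x in M. X x = real_cond_exp M (sigma_gen M X) Y x)
            \<longrightarrow> measure M {x \<in> space M. \<bar>Y x - X x\<bar> \<ge> 1 - \<delta>} \<le> \<delta>)
       \<and> (\<forall>X Y. Y \<in> borel_measurable M
            \<longrightarrow> (\<forall>x \<in> space M. X x = \<delta>)
            \<longrightarrow> distr M borel Y = distr (measure_pmf (bernoulli_pmf \<delta>)) borel (\<lambda>b. if b then 1 else 0)
            \<longrightarrow> measure M {x \<in> space M. \<bar>Y x - X x\<bar> \<ge> 1 - \<delta>} = \<delta>)"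
  using prob_deviation_le_of_cond_exp[OF assms] prob_deviation_bernoulli[OF assms(2,3)] by blast

end
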